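(* Assume the standing assumptions (A1)–(A4) and let $r>0$ be a constant such that $\|u\|^2+\|w\|^2\le r$ for every $u\in\mathcal U$ and every extreme point $w$ of $\mathcal W$. Then the optimal value of \[ (\overline{RLP})\quad \min_{x,\lambda,\Lambda,\rho}\ c^Tx+\lambda+r\rho\ \ \text{s.t.}\ \ x\in\mathcal X,\ \ \lambda g_1g_1^T-\tfrac12G(x)+\tfrac12(E^T\Lambda^T+\Lambda E)+\rho I\in\mathrm{COP}(\widehat{\mathcal U}\times\mathbb R^m_+),\ \ \rho\ge0, \] with $\lambda,\rho\in\mathbb R$, $\Lambda\in\mathbb R^{(k+m)\times n_2}$, equals $v^*_{RLP}$.
   Context: Data: $A\in\mathbb R^{m\times n_1}$, $B\in\mathbb R^{m\times n_2}$, $c\in\mathbb R^{n_1}$, $d\in\mathbb R^{n_2}$, $F\in\mathbb R^{m\times k}$, $\mathcal X\subseteq\mathbb R^{n_1}$ closed convex. $\widehat{\mathcal U}\subseteq\mathbb R_+\times\mathbb R^{k-1}$ is a closed, convex, full-dimensional cone and $\mathcal U:=\{u\in\widehat{\mathcal U}: u_1=1\}$, assumed nonempty and compact. $e_1\in\mathbb R^k$ is the first standard basis vector, $g_1:=(e_1;0)\in\mathbb R^{k+m}$. The two-stage problem (RLP) is: $v^*_{RLP}:=\inf\{c^Tx+\sup_{u\in\mathcal U}d^Ty(u)\}$ over $x\in\mathcal X$ and maps $y:\mathcal U\to\mathbb R^{n_2}$ with $Ax+By(u)\ge Fu$ for all $u\in\mathcal U$. Standing assumptions: (A1) $\mathcal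 X$ and $\widehat{\mathcal U}$ are computationally tractable; (A2) (RLP) is feasible; (A3) $v^*_{RLP}$ is finite; (A4) relatively complete recourse: for all $x\in\mathcal X$, $u\in\mathcal U$ there is $y\in\mathbb R^{n_2}$ with $By\ge Fu-Ax$. Define $\mathcal W:=\{w\in\mathbb R^m: w\ge0,\ B^Tw=d\}$, $E:=\begin{pmatrix}-de_1^T & B^T\end{pmatrix}\in\mathbb R^{n_2\times(k+m)}$, $G(x):=\begin{pmatrix}0&(F-Axe_1^T)^T\\ F-Axe_1^T&0\end{pmatrix}\in\mathcal S^{k+m}$. For a closed convex cone $\mathcal K\subseteq\mathbb R^n$, $\mathrm{COP}(\mathcal K):=\{M\in\mathcal S^n: z^TMz\ge0\ \forall z\in\mathcal K\}$. *)

theory Defs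
  imports "HOL-Analysis.Analysis"
begin

text \<open>Dimensions are index types: 'n1, 'n2 (decision variables), 'm (constraints),
  'k (uncertainty). The distinguished index i1 :: 'k plays the role of the first
  coordinate (e_1). Vectors in R^(k+m) are indexed by the sum type 'k + 'm,
  with Inl i the first k coordinates and Inr l the last m coordinates.\<close>

definition copositive :: "(real^'n::finite) set \<Rightarrow> (real^'n^'n) set" where
  "copositive K = {M. transpose M = M \<and> (\<forall>z\<in>K. 0 \<le> z \<bullet> (M *v z))}"

definition join_vec :: "real^'k::finite \<Rightarrow> real^'m::finite \<Rightarrow> real^('k + 'm)" where
  "join_vec u w = (\<chi> j. case j of Inl i \<Rightarrow> u $ i | Inr l \<Rightarrow> w $ l)"

definition prod_cone :: "(real^'k::finite) set \<Rightarrow> (real^('k + 'm::finite)) set" where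
  "prod_cone Uh = {join_vec u (w :: real^'m) | u w. u \<in> Uh \<and> (\<forall>l. 0 \<le> w $ l)}"

definition unc_set :: "'k::finite \<Rightarrow> (real^'k) set \<Rightarrow> (real^'k) set" where
  "unc_set i1 Uh = {u \<in> Uh. u $ i1 = 1}"

definition dual_set :: "real^'n2::finite^'m::finite \<Rightarrow> real^'n2 \<Rightarrow> (real^'m) set" where
  "dual_set B d = {w. (\<forall>l. 0 \<le> w $ l) \<and> transpose B *v w = d}"

definition e1 :: "'k::finite \<Rightarrow> real^'k" where
  "e1 i1 = (\<chi> i. if i = i1 then 1 else 0)"

definition g1 :: "'k::finite \<Rightarrow> real^('k + 'm::finite)" where
  "g1 i1 = join_vec (e1 i1) 0"

text \<open>E = ( -d e_1^T  B^T ) in R^(n2 x (k+m)).\<close>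
definition Emat :: "'k::finite \<Rightarrow> real^'n2::finite \<Rightarrow> real^'n2^'m::finite \<Rightarrow> real^('k + 'm)^'n2" where
  "Emat i1 d B = (\<chi> j q. case q of Inl i \<Rightarrow> - (d $ j) * (e1 i1 $ i)
                                 | Inr l \<Rightarrow> B $ l $ j)"

text \<open>G(x) = [[0, (F - A x e_1^T)^T], [F - A x e_1^T, 0]].\<close>
definition Gmat :: "'k::finite \<Rightarrow> real^'n1::finite^'m::finite \<Rightarrow> real^'k^'m \<Rightarrow> real^'n1 \<Rightarrow> real^('k + 'm)^('k + 'm)" where
  "Gmat i1 A F x =
     (let H = (\<chi> l i. F $ l $ i - (A *v x) $ l * (e1 i1 $ i)) :: real^'k^'m in
      (\<chi> p q. case (p, q) of
          (Inl i, Inr l) \<Rightarrow> H $ l $ i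
        | (Inr l, Inl i) \<Rightarrow> H $ l $ i
        | _ \<Rightarrow> 0))"

definition outer :: "real^'n::finite \<Rightarrow> real^'n^'n" where
  "outer g = (\<chi> i j. g $ i * g $ j)"

definition rlp_value ::
  "(real^'n1::finite) set \<Rightarrow> real^'n1 \<Rightarrow> real^'n2::finite \<Rightarrow> real^'n1^'m::finite \<Rightarrow> real^'n2^'m \<Rightarrow> real^'k::finite^'m
   \<Rightarrow> (real^'k) set \<Rightarrow> ereal" where
  "rlp_value X c d A B F U =
     Inf {ereal (c \<bullet> x) + (SUP u\<in>U. ereal (d \<bullet> y u)) | x y.
            x \<in> X \<and> (\<forall>u\<in>U. \<forall>l. (A *v x + B *v y u) $ l \<ge> (F *v u) $ l)}"

definition cop_matrix ::
  "'k::finite \<Rightarrow> real^'n2::finite \<Rightarrow> real^'n1::finite^'m::finite \<Rightarrow> real^'n2^'m \<Rightarrow> real^'k^'m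
   \<Rightarrow> real^'n1 \<Rightarrow> real \<Rightarrow> real^'n2^('k + 'm) \<Rightarrow> real \<Rightarrow> real^('k + 'm)^('k + 'm)" where
  "cop_matrix i1 d A B F x lam Lam rho =
     lam *\<^sub>R outer (g1 i1) - (1/2) *\<^sub>R Gmat i1 A F x
     + (1/2) *\<^sub>R (transpose (Lam ** Emat i1 d B) + Lam ** Emat i1 d B)
     + rho *\<^sub>R mat 1"

definition rlp_bar_value ::
  "'k::finite \<Rightarrow> (real^'n1::finite) set \<Rightarrow> real^'n1 \<Rightarrow> real^'n2::finite \<Rightarrow> real^'n1^'m::finite \<Rightarrow> real^'n2^'m \<Rightarrow> real^'k^'m
   \<Rightarrow> (real^'k) set \<Rightarrow> real \<Rightarrow> ereal" where
  "rlp_bar_value i1 X c d A B F Uh r =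
     Inf {ereal (c \<bullet> x + lam + r * rho) | x lam (Lam :: real^'n2^('k + 'm)) rho.
            x \<in> X \<and> rho \<ge> 0 \<and>
            cop_matrix i1 d A B F x lam Lam rho \<in> copositive (prod_cone Uh :: (real^('k+'m)) set)}"

end

theory Submission
  imports Defs
begin

text \<open>
  Fix a first-stage decision x. Testing the copositive constraint on z = (u; w) with u \<in> U
  and w an extreme point of W gives E z = 0, so the \<Lambda>-terms vanish and
  w^T(F u - A x) \<le> \<lambda> + r \<rho>. Since W lies in the nonnegative orthant, LP duality can be
  checked on its extreme points, so every scenario u has a recourse of cost at most \<lambda> + r \<rho>.

  Conversely, let t bound the worst-case recourse cost of x, i.e. w^T(F u - A x) \<le> t on
  U \<times> W. If no (\<lambda>, \<Lambda>, \<rho>) reached \<lambda> + r \<rho> \<le> t + \<epsilon>, a separating hyperplane would yield a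
  multiplier Y in the dual cone of COP(Uhat \<times> R^m_+), i.e. a nonnegative combination of
  matrices z z^T with z in the cone, such that Y \<bullet> E^TE = 0. Every such z with E z = 0 is a
  nonnegative multiple of some (u; w) \<in> U \<times> W, compactness of U ruling out u_1 = 0, so the
  bound t applies term by term and forces Y = 0.
\<close>

section \<open>Outer products and the Frobenius inner product\<close>

lemma sum_UNIV_Plus:
  "sum f (UNIV :: ('a::finite + 'b::finite) set) = (\<Sum>i\<in>UNIV. f (Inl i)) + (\<Sum>j\<in>UNIV. f (Inr j))"
  by (simp flip: UNIV_Plus_UNIV add: sum.Plus)

lemma transpose_add: "transpose (X + Y) = transpose X + transpose Y"
  and transpose_diff: "transpose (X - Y) = transpose X - transpose Y"
  and transpose_zero: "transpose 0 = (0 :: 'a^'m^'n)"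
  for X Y :: "'a::ab_group_add^'n^'m"
  by (simp_all add: vec_eq_iff transpose_def)

lemma matrix_vector_mult_uminus_right: "A *v (- x) = - (A *v x)"
  for A :: "'a::comm_ring_1^'n::finite^'m"
  by (simp add: vec_eq_iff matrix_vector_mult_def sum_negf)

lemma matrix_mul_zero_left [simp]: "0 ** A = 0"
  for A :: "'a::semiring_1^'p^'m::finite"
  by (simp add: vec_eq_iff matrix_matrix_mult_def)

lemma matrix_add_rdistrib: "(X + Y) ** (Z :: 'a::semiring_1^'p^'n) = X ** Z + Y ** (Z :: 'a^'p^'n)"
  by (simp add: vec_eq_iff matrix_matrix_mult_def sum.distrib algebra_simps)

lemma inner_transpose_transpose: "transpose X \<bullet> transpose Y = X \<bullet> (Y :: real^'n::finite^'m::finite)"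
  unfolding inner_vec_def transpose_def by (simp add: inner_real_def, subst sum.swap, simp)

lemma inner_outer: "X \<bullet> outer z = z \<bullet> (X *v z)"
  for X :: "real^'n::finite^'n"
  by (simp add: inner_vec_def matrix_vector_mult_def outer_def sum_distrib_left mult_ac)

lemma outer_inner_outer: "outer g \<bullet> outer z = (g \<bullet> z)\<^sup>2"
  for g z :: "real^'n::finite"
proof -
  have "outer g *v z = (g \<bullet> z) *\<^sub>R g"
    by (simp add: vec_eq_iff matrix_vector_mult_def outer_def inner_vec_def sum_distrib_left
        mult_ac)
  then show ?thesis by (simp add: inner_outer power2_eq_square inner_commute)
qed

lemma transpose_outer: "transpose (outer z) = outer z"
  by (simp add: transpose_def outer_def vec_eq_iff mult.commute)

lemma transpose_inner_outer: "transpose X \<bullet> outer z = X \<bullet> outer z"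
  for X :: "real^'n::finite^'n"
  by (metis inner_transpose_transpose transpose_outer)

lemma matrix_mult_inner_outer: "(X ** Y) \<bullet> outer z = z \<bullet> (X *v (Y *v z))"
  for X :: "real^'p::finite^'n::finite"
  by (simp add: inner_outer matrix_vector_mul_assoc)

lemma inner_transpose_mult_vector: "x \<bullet> (transpose E *v y) = (E *v x) \<bullet> y"
  for E :: "real^'n::finite^'m::finite"
  by (metis dot_lmul_matrix inner_commute transpose_matrix_vector)

lemma transpose_mult_self_inner_outer: "(transpose E ** E) \<bullet> outer z = (E *v z) \<bullet> (E *v z)"
  for z :: "real^'n::finite"
  by (simp only: matrix_mult_inner_outer inner_transpose_mult_vector)

lemma mat_1_inner_outer: "mat 1 \<bullet> outer z = (norm z)\<^sup>2"
  for z :: "real^'n::finite"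
  by (simp add: inner_outer power2_norm_eq_inner)

lemma outer_0 [simp]: "outer 0 = 0"
  by (simp add: vec_eq_iff outer_def)

lemma outer_scaleR: "outer (c *\<^sub>R z) = c\<^sup>2 *\<^sub>R outer z"
  by (simp add: vec_eq_iff outer_def power2_eq_square mult_ac)

lemma continuous_on_outer: "continuous_on S (outer :: real^'n::finite \<Rightarrow> _)"
  unfolding outer_def by (intro continuous_intros)

lemma inner_sum_outer:
  "(\<Sum>z\<in>Z. \<mu> z *\<^sub>R outer z) \<bullet> M = (\<Sum>z\<in>Z. \<mu> z * (M \<bullet> outer z))"
  for M :: "real^'n::finite^'n"
  by (simp add: inner_sum_left inner_commute[of "outer _" M])

section \<open>Block coordinates of the lifted space\<close>

lemma join_vec_nth [simp]: "join_vec u w $ Inl i = u $ i" "join_vec u w $ Inr l = w $ l"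
  by (simp_all add: join_vec_def)

lemma join_vec_split: "z = join_vec (\<chi> i. z $ Inl i) (\<chi> l. z $ Inr l)"
  by (simp add: vec_eq_iff join_vec_def split: sum.split)

lemma inner_join_vec: "join_vec u w \<bullet> join_vec u' w' = u \<bullet> u' + w \<bullet> w'"
  by (simp add: inner_vec_def sum_UNIV_Plus)

lemma norm_join_vec: "(norm (join_vec u w))\<^sup>2 = (norm u)\<^sup>2 + (norm w)\<^sup>2"
  by (simp add: power2_norm_eq_inner inner_join_vec)

lemma e1_nth_mult:
  "e1 i1 $ i * a = (if i = i1 then a else 0)" "a * e1 i1 $ i = (if i = i1 then a else 0)"
  by (simp_all add: e1_def)

lemma inner_e1: "e1 i1 \<bullet> u = u $ i1"
  by (simp add: inner_vec_def e1_nth_mult)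

lemma Emat_join_vec: "Emat i1 d B *v join_vec u w = transpose B *v w - (u $ i1) *\<^sub>R d"
  by (simp add: vec_eq_iff Emat_def matrix_vector_mult_def sum_UNIV_Plus transpose_def
      e1_nth_mult if_distrib[of "\<lambda>a. a * _"] cong: if_cong)

lemma g1_inner_join_vec: "g1 i1 \<bullet> join_vec u w = u $ i1"
  by (simp add: g1_def inner_join_vec inner_e1)

lemma Gmat_inner_outer_join_vec:
  "Gmat i1 A F x \<bullet> outer (join_vec u w) = 2 * (w \<bullet> (F *v u) - (w \<bullet> (A *v x)) * u $ i1)"
proof -
  have row: "(\<Sum>i\<in>UNIV. w$l * u$i * (F$l$i - a * e1 i1 $ i)) = w$l * (F *v u)$l - w$l * a * u$i1"
    for l a
    by (simp add: matrix_vector_mult_def right_diff_distrib sum_subtractf sum_distrib_left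
        e1_nth_mult if_distrib[of "\<lambda>c. _ * c"] mult_ac cong: if_cong)
  have "Gmat i1 A F x \<bullet> outer (join_vec u w) =
     (\<Sum>i\<in>UNIV. \<Sum>l\<in>UNIV. u$i * w$l * (F$l$i - (A *v x)$l * e1 i1 $ i))
   + (\<Sum>l\<in>UNIV. \<Sum>i\<in>UNIV. w$l * u$i * (F$l$i - (A *v x)$l * e1 i1 $ i))"
    by (simp add: inner_vec_def outer_def sum_UNIV_Plus Gmat_def Let_def mult_ac)
  also have "\<dots> = 2 * (\<Sum>l\<in>UNIV. \<Sum>i\<in>UNIV. w$l * u$i * (F$l$i - (A *v x)$l * e1 i1 $ i))"
    by (subst sum.swap) (simp add: mult_ac)
  also have "\<dots> = 2 * (w \<bullet> (F *v u) - (w \<bullet> (A *v x)) * u $ i1)"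
    by (simp add: row inner_vec_def sum_subtractf sum_distrib_right)
  finally show ?thesis .
qed

lemma transpose_Gmat: "transpose (Gmat i1 A F x) = Gmat i1 A F x"
  by (simp add: vec_eq_iff transpose_def Gmat_def Let_def split: sum.split)

lemma prod_cone_iff: "z \<in> prod_cone Uh \<longleftrightarrow> (\<chi> i. z $ Inl i) \<in> Uh \<and> (\<forall>l. 0 \<le> z $ Inr l)"
proof
  assume "z \<in> prod_cone Uh"
  then show "(\<chi> i. z $ Inl i) \<in> Uh \<and> (\<forall>l. 0 \<le> z $ Inr l)"
    unfolding prod_cone_def by auto
next
  assume "(\<chi> i. z $ Inl i) \<in> Uh \<and> (\<forall>l. 0 \<le> z $ Inr l)"
  then show "z \<in> prod_cone Uh"
    unfolding prod_cone_def by (subst join_vec_split) force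
qed

lemma join_vec_in_prod_cone: "join_vec u w \<in> prod_cone Uh \<longleftrightarrow> u \<in> Uh \<and> (\<forall>l. 0 \<le> w $ l)"
  by (simp add: prod_cone_iff)

lemma closed_prod_cone:
  assumes "closed Uh"
  shows "closed (prod_cone Uh :: (real^('k::finite + 'm::finite)) set)"
proof -
  have "prod_cone Uh = (\<lambda>z::real^('k + 'm). \<chi> i. z $ Inl i) -` Uh \<inter> (\<Inter>l. {z. 0 \<le> z $ Inr l})"
    by (auto simp: prod_cone_iff)
  moreover have "closed ((\<lambda>z::real^('k + 'm). \<chi> i. z $ Inl i) -` Uh)"
    by (intro continuous_closed_vimage assms continuous_intros)
  ultimately show ?thesis
    by (simp add: closed_INT closed_Int closed_Collect_le continuous_on_const
        continuous_on_component)
qed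

lemma cone_prod_cone: "cone Uh \<Longrightarrow> cone (prod_cone Uh :: (real^('k::finite + 'm::finite)) set)"
proof -
  have "(\<chi> i. (c *\<^sub>R z) $ Inl i) = c *\<^sub>R (\<chi> i. z $ Inl i)" for c and z :: "real^('k+'m)"
    by (simp add: vec_eq_iff)
  then show "cone Uh \<Longrightarrow> cone (prod_cone Uh :: (real^('k::finite + 'm::finite)) set)"
    unfolding cone_def by (auto simp: prod_cone_iff)
qed

section \<open>The copositive constraint\<close>

lemma copositive_iff_inner_outer:
  "M \<in> copositive K \<longleftrightarrow> transpose M = M \<and> (\<forall>z\<in>K. 0 \<le> M \<bullet> outer z)"
  by (simp add: copositive_def inner_outer)

lemma zero_in_copositive: "0 \<in> copositive K"
  by (simp add: copositive_iff_inner_outer transpose_zero)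

lemma convex_copositive: "convex (copositive K)"
  unfolding convex_def
  by (auto simp: copositive_iff_inner_outer transpose_add transpose_scalar inner_add_left
      intro!: add_nonneg_nonneg)

lemma cone_copositive: "cone (copositive K)"
  unfolding cone_def by (auto simp: copositive_iff_inner_outer transpose_scalar)

lemma transpose_cop_matrix:
  "transpose (cop_matrix i1 d A B F x lam Lam rho) = cop_matrix i1 d A B F x lam Lam rho"
  by (simp add: cop_matrix_def transpose_add transpose_diff transpose_scalar transpose_outer
      transpose_Gmat)

lemma inner_cop_matrix:
  "Y \<bullet> cop_matrix i1 d A B F x lam Lam rho =
     lam * (Y \<bullet> outer (g1 i1)) - (1/2) * (Y \<bullet> Gmat i1 A F x)
     + (1/2) * (Y \<bullet> transpose (Lam ** Emat i1 d B) + Y \<bullet> (Lam ** Emat i1 d B)) + rho * (Y \<bullet> mat 1)"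
  by (simp add: cop_matrix_def inner_add_right inner_diff_right)

lemma cop_matrix_affine:
  assumes "u + v = 1"
  shows "u *\<^sub>R cop_matrix i1 d A B F x l1 L1 r1 + v *\<^sub>R cop_matrix i1 d A B F x l2 L2 r2
       = cop_matrix i1 d A B F x (u * l1 + v * l2) (u *\<^sub>R L1 + v *\<^sub>R L2) (u * r1 + v * r2)"
proof -
  define lin where "lin lam Lam rho = lam *\<^sub>R outer (g1 i1)
     + (1/2) *\<^sub>R (transpose (Lam ** Emat i1 d B) + Lam ** Emat i1 d B) + rho *\<^sub>R mat 1"
    for lam Lam rho
  have cop: "cop_matrix i1 d A B F x lam Lam rho = lin lam Lam rho - (1/2) *\<^sub>R Gmat i1 A F x"
    for lam Lam rho
    unfolding cop_matrix_def lin_def by (simp add: algebra_simps)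
  have "lin (u * l1 + v * l2) (u *\<^sub>R L1 + v *\<^sub>R L2) (u * r1 + v * r2)
      = u *\<^sub>R lin l1 L1 r1 + v *\<^sub>R lin l2 L2 r2"
    unfolding lin_def matrix_add_rdistrib scalar_matrix_assoc[symmetric]
    by (simp add: transpose_add transpose_scalar algebra_simps)
  moreover have "u *\<^sub>R (P - G) + v *\<^sub>R (Q - G) = (u *\<^sub>R P + v *\<^sub>R Q) - G"
    for P Q G :: "'v::real_vector"
    using assms by (simp add: algebra_simps flip: scaleR_add_left)
  ultimately show ?thesis unfolding cop by simp
qed

lemma cop_matrix_inner_outer_join_vec:
  assumes "transpose B *v w = d" "u $ i1 = 1"
  shows "cop_matrix i1 d A B F x lam Lam rho \<bullet> outer (join_vec u w) =
     lam - w \<bullet> (F *v u - A *v x) + rho * ((norm u)\<^sup>2 + (norm w)\<^sup>2)"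
proof -
  have "Emat i1 d B *v join_vec u w = 0"
    using assms by (simp add: Emat_join_vec del: transpose_matrix_vector)
  then have "(Lam ** Emat i1 d B) \<bullet> outer (join_vec u w) = 0"
    by (simp add: matrix_mult_inner_outer)
  then have "cop_matrix i1 d A B F x lam Lam rho \<bullet> outer (join_vec u w) =
      lam * (g1 i1 \<bullet> join_vec u w)\<^sup>2 - (1/2) * (Gmat i1 A F x \<bullet> outer (join_vec u w))
      + rho * (norm (join_vec u w))\<^sup>2"
    unfolding cop_matrix_def
    by (simp add: inner_add_left inner_diff_left transpose_inner_outer mat_1_inner_outer
        outer_inner_outer)
  also have "\<dots> = lam - w \<bullet> (F *v u - A *v x) + rho * ((norm u)\<^sup>2 + (norm w)\<^sup>2)"
    by (simp add: g1_inner_join_vec Gmat_inner_outer_join_vec norm_join_vec assms inner_diff_right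
        right_diff_distrib)
  finally show ?thesis .
qed

section \<open>Conic separation and linear programming duality\<close>

lemma affine_nonneg_imp_slope_eq_0:
  assumes "\<And>s::real. 0 \<le> a + s * b"
  shows "b = 0"
proof (rule ccontr)
  assume "b \<noteq> 0"
  with assms[of "- (a + 1) / b"] show False by simp
qed

lemma affine_nonneg_imp_slope_nonneg:
  assumes "\<And>s::real. 0 \<le> s \<Longrightarrow> 0 \<le> a + s * b"
  shows "0 \<le> b"
proof (rule ccontr)
  assume "\<not> 0 \<le> b"
  then have "0 \<le> (\<bar>a\<bar> + 1) / - b" and "(\<bar>a\<bar> + 1) / - b * b = - (\<bar>a\<bar> + 1)"
    by (simp_all add: divide_nonneg_neg)
  with assms[of "(\<bar>a\<bar> + 1) / - b"] show False by linarith
qed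

lemma separating_hyperplane_closed_convex_cone:
  fixes C :: "'a::euclidean_space set"
  assumes "closed C" "convex_cone C" "y \<notin> C"
  shows "\<exists>h. h \<bullet> y < 0 \<and> (\<forall>x\<in>C. 0 \<le> h \<bullet> x)"
proof -
  obtain h \<beta> where h: "h \<bullet> y < \<beta>" "\<forall>x\<in>C. \<beta> < h \<bullet> x"
    using separating_hyperplane_closed_point[OF _ assms(1,3)] assms(2)
    unfolding convex_cone_def by blast
  have "\<beta> < 0"
    using h(2) assms(2) unfolding convex_cone_iff by fastforce
  moreover have "0 \<le> h \<bullet> x" if "x \<in> C" for x
  proof (rule affine_nonneg_imp_slope_nonneg[of "- \<beta>"])
    fix s :: real
    assume "0 \<le> s"
    with assms(2) that have "s *\<^sub>R x \<in> C"
      by (simp add: convex_cone_iff)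
    with h(2) have "\<beta> < h \<bullet> (s *\<^sub>R x)" by blast
    then show "0 \<le> - \<beta> + s * (h \<bullet> x)" by simp
  qed
  ultimately show ?thesis using h(1) by (intro exI[of _ h]) auto
qed

lemma inner_le_transpose_mult_inner:
  fixes B :: "real^'n::finite^'m::finite"
  assumes "\<forall>l. 0 \<le> w $ l" "\<forall>l. b $ l \<le> (B *v y) $ l"
  shows "w \<bullet> b \<le> (transpose B *v w) \<bullet> y"
proof -
  have "w \<bullet> b \<le> w \<bullet> (B *v y)"
    unfolding inner_vec_def using assms by (auto intro!: sum_mono mult_left_mono)
  then show ?thesis by (simp add: dot_lmul_matrix)
qed

lemma convex_cone_inequality_slacks:
  fixes B :: "real^'n::finite^'m::finite"
  shows "convex_cone {(B *v y - p, d \<bullet> y + q) | y p q :: real. (\<forall>l. 0 \<le> p $ l) \<and> 0 \<le> q}"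
  (is "convex_cone ?R")
proof -
  have mem: "(B *v y - p, d \<bullet> y + q) \<in> ?R" if "\<forall>l. 0 \<le> p $ l" "0 \<le> q" for y p q
    using that by blast
  show ?thesis
    unfolding convex_cone_iff
  proof (intro conjI ballI allI impI)
    have "(B *v 0 - 0, d \<bullet> 0 + (0::real)) \<in> ?R" by (rule mem) simp_all
    then show "0 \<in> ?R" by (simp add: zero_prod_def)
    fix x z assume "x \<in> ?R" "z \<in> ?R"
    then obtain y p q y' p' q'
      where xz: "x = (B *v y - p, d \<bullet> y + q)" "z = (B *v y' - p', d \<bullet> y' + q')"
      and nonneg: "\<forall>l. 0 \<le> p $ l" "0 \<le> q" "\<forall>l. 0 \<le> p' $ l" "0 \<le> q'"
      by blast
    have "(B *v (y + y') - (p + p'), d \<bullet> (y + y') + (q + q')) \<in> ?R"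
      by (rule mem) (use nonneg in auto)
    moreover have "x + z = (B *v (y + y') - (p + p'), d \<bullet> (y + y') + (q + q'))"
      by (simp add: xz matrix_vector_right_distrib inner_add_right)
    ultimately show "x + z \<in> ?R" by (simp only:)
  next
    fix x and c :: real assume "x \<in> ?R" "0 \<le> c"
    then obtain y p q where x: "x = (B *v y - p, d \<bullet> y + q)" "\<forall>l. 0 \<le> p $ l" "0 \<le> q"
      by blast
    have "(B *v (c *\<^sub>R y) - c *\<^sub>R p, d \<bullet> (c *\<^sub>R y) + c * q) \<in> ?R"
      by (rule mem) (use x \<open>0 \<le> c\<close> in auto)
    moreover have "c *\<^sub>R x = (B *v (c *\<^sub>R y) - c *\<^sub>R p, d \<bullet> (c *\<^sub>R y) + c * q)"
      by (simp add: x matrix_vector_mult_scaleR scaleR_diff_right distrib_left)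
    ultimately show "c *\<^sub>R x \<in> ?R" by (simp only:)
  qed
qed

text \<open>
  The set R = {(B y - p, d^Ty + q) | p \<ge> 0, q \<ge> 0} misses (b, s) and contains the cone
  generated by the finite set G below, which is closed; separating (b, s) from that cone
  gives the Farkas multipliers.
\<close>

lemma separating_hyperplane_inequality_system:
  fixes B :: "real^'n::finite^'m::finite"
  assumes infeasible: "\<nexists>y. (\<forall>l. b $ l \<le> (B *v y) $ l) \<and> d \<bullet> y \<le> s"
  shows "\<exists>h. h \<bullet> (b, s) < 0 \<and> (\<forall>j. 0 \<le> h \<bullet> (column j B, d $ j) \<and> 0 \<le> h \<bullet> - (column j B, d $ j))
    \<and> (\<forall>l. 0 \<le> h \<bullet> (- axis l 1, 0)) \<and> 0 \<le> h \<bullet> (0, 1)"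
proof -
  define R where "R = {(B *v y - p, d \<bullet> y + q) | y p q :: real. (\<forall>l. 0 \<le> p $ l) \<and> 0 \<le> q}"
  define G where "G = range (\<lambda>j. (column j B, d $ j)) \<union> range (\<lambda>j. - (column j B, d $ j))
      \<union> range (\<lambda>l. (- axis l 1, 0)) \<union> {(0, 1)}"
  have mem: "(B *v y - p, d \<bullet> y + q) \<in> R" if "\<forall>l. 0 \<le> p $ l" "0 \<le> q" for y p q
    using that unfolding R_def by blast
  have "(column j B, d $ j) \<in> R" "- (column j B, d $ j) \<in> R" for j
    using mem[of 0 0 "axis j 1"] mem[of 0 0 "- axis j 1"]
    by (simp_all add: matrix_vector_mult_basis inner_axis matrix_vector_mult_uminus_right)
  moreover have "(- axis l 1, 0) \<in> R" for l
    using mem[of "axis l 1" 0 0] by (simp add: axis_def)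
  moreover have "(0, 1) \<in> R"
    using mem[of 0 1 0] by simp
  ultimately have "G \<subseteq> R"
    unfolding G_def by blast
  moreover have "convex_cone R"
    unfolding R_def by (rule convex_cone_inequality_slacks)
  ultimately have "convex_cone hull G \<subseteq> R"
    by (rule hull_minimal)
  moreover have "(b, s) \<notin> R"
  proof
    assume "(b, s) \<in> R"
    then obtain y p q where "b = B *v y - p" "s = d \<bullet> y + q" "\<forall>l. 0 \<le> p $ l" "0 \<le> q"
      unfolding R_def by blast
    then have "(\<forall>l. b $ l \<le> (B *v y) $ l) \<and> d \<bullet> y \<le> s" by auto
    with infeasible show False by blast
  qed
  ultimately have "(b, s) \<notin> convex_cone hull G"
    by blast
  moreover have "closed (convex_cone hull G)"
    by (rule closed_convex_cone_hull) (simp add: G_def)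
  ultimately obtain h where h: "h \<bullet> (b, s) < 0" "\<forall>x\<in>convex_cone hull G. 0 \<le> h \<bullet> x"
    using separating_hyperplane_closed_convex_cone convex_cone_convex_cone_hull by metis
  have "(column j B, d $ j) \<in> G" "- (column j B, d $ j) \<in> G" "(- axis l 1, 0) \<in> G" "(0, 1) \<in> G"
    for j l
    unfolding G_def by blast+
  note generators = this[THEN hull_inc, THEN h(2)[rule_format]]
  show ?thesis
    using h(1) generators by blast
qed

lemma farkas_inequality_system:
  fixes B :: "real^'n::finite^'m::finite"
  assumes "\<nexists>y. (\<forall>l. b $ l \<le> (B *v y) $ l) \<and> d \<bullet> y \<le> s"
  shows "\<exists>w \<mu>. (\<forall>l. 0 \<le> w $ l) \<and> 0 \<le> \<mu> \<and> transpose B *v w = \<mu> *\<^sub>R d \<and> \<mu> * s < w \<bullet> b"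
proof -
  obtain h where h: "h \<bullet> (b, s) < 0"
    "\<forall>j. 0 \<le> h \<bullet> (column j B, d $ j) \<and> 0 \<le> h \<bullet> - (column j B, d $ j)"
    "\<forall>l. 0 \<le> h \<bullet> (- axis l 1, 0)" "0 \<le> h \<bullet> (0, 1)"
    using separating_hyperplane_inequality_system[OF assms] by blast
  define w \<mu> where "w = - fst h" and "\<mu> = snd h"
  then have h_eq: "h = (- w, \<mu>)" by simp
  have "(transpose B *v w) $ j = \<mu> * d $ j" for j
    using h(2)[rule_format, of j] unfolding h_eq
    by (simp add: matrix_vector_mult_def transpose_def inner_vec_def column_def mult.commute
        sum_negf)
  moreover have "0 \<le> w $ l" for l
    using h(3) unfolding h_eq by (simp add: inner_axis)
  ultimately show ?thesis
    using h(1,4) unfolding h_eq by (intro exI[of _ w] exI[of _ \<mu>]) (auto simp: vec_eq_iff)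
qed

lemma nonneg_add_ray_shrinks_support:
  fixes w v :: "real^'m::finite"
  assumes w_nonneg: "\<forall>l. 0 \<le> w $ l" and neg: "v $ l0 < 0"
    and supp: "\<forall>l. w $ l = 0 \<longrightarrow> v $ l = 0"
  shows "\<exists>t\<ge>0. (\<forall>l. 0 \<le> (w + t *\<^sub>R v) $ l) \<and> {l. (w + t *\<^sub>R v) $ l \<noteq> 0} \<subset> {l. w $ l \<noteq> 0}"
proof -
  define L where "L = {l. v $ l < 0}"
  define t where "t = Min ((\<lambda>l. w $ l / - v $ l) ` L)"
  have "finite L" "l0 \<in> L" by (simp_all add: L_def neg)
  then obtain l1 where l1: "l1 \<in> L" "t = w $ l1 / - v $ l1"
    using Min_in[of "(\<lambda>l. w $ l / - v $ l) ` L"] unfolding t_def by blast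
  have t_le: "t \<le> w $ l / - v $ l" if "l \<in> L" for l
    unfolding t_def using \<open>finite L\<close> that by (auto intro!: Min_le)
  have "0 \<le> t"
    using l1 w_nonneg by (simp add: L_def divide_nonneg_neg)
  have nonneg: "0 \<le> (w + t *\<^sub>R v) $ l" for l
  proof (cases "l \<in> L")
    case True
    then have "t \<le> w $ l / - v $ l" "0 < - v $ l"
      using t_le by (auto simp: L_def)
    then have "t * - v $ l \<le> w $ l"
      by (simp only: pos_le_divide_eq)
    then show ?thesis by simp
  next
    case False
    then show ?thesis using \<open>0 \<le> t\<close> w_nonneg by (simp add: L_def)
  qed
  have "(w + t *\<^sub>R v) $ l1 = 0" "w $ l1 \<noteq> 0"
    using l1 supp by (auto simp: L_def)
  moreover have "{l. (w + t *\<^sub>R v) $ l \<noteq> 0} \<subseteq> {l. w $ l \<noteq> 0}"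
    using supp by auto
  ultimately show ?thesis
    using \<open>0 \<le> t\<close> nonneg by blast
qed

lemma dual_set_non_extreme_point_direction:
  assumes "w \<in> dual_set B d" "\<not> w extreme_point_of dual_set B d"
  shows "\<exists>v. v \<noteq> 0 \<and> transpose B *v v = 0 \<and> (\<forall>l. w $ l = 0 \<longrightarrow> v $ l = 0)"
proof -
  obtain a c where ac: "a \<in> dual_set B d" "c \<in> dual_set B d" "w \<in> open_segment a c"
    using assms unfolding extreme_point_of_def by blast
  then obtain \<theta> where \<theta>: "0 < \<theta>" "\<theta> < 1" "w = (1 - \<theta>) *\<^sub>R a + \<theta> *\<^sub>R c" "a \<noteq> c"
    by (auto simp: in_segment)
  have "a - w = \<theta> *\<^sub>R (a - c)"
    using \<theta>(3) by (simp add: algebra_simps)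
  then have "a - w \<noteq> 0"
    using \<theta> by simp
  moreover have "transpose B *v (a - w) = 0"
    using ac(1) assms(1) by (simp add: dual_set_def matrix_vector_mult_diff_distrib)
  moreover have "a $ l = 0" if "w $ l = 0" for l
  proof -
    have "(1 - \<theta>) * a $ l + \<theta> * c $ l = 0" "0 \<le> a $ l" "0 \<le> c $ l"
      using that \<theta>(3) ac by (auto simp: dual_set_def)
    with \<theta> show ?thesis
      by (smt (verit) mult_nonneg_nonneg mult_pos_pos)
  qed
  ultimately show ?thesis
    by (intro exI[of _ "a - w"]) auto
qed

lemma recession_direction_sign:
  fixes B :: "real^'n::finite^'m::finite"
  assumes rec: "\<And>v. \<forall>l. 0 \<le> v $ l \<Longrightarrow> transpose B *v v = 0 \<Longrightarrow> v \<bullet> b \<le> 0"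
    and Bv: "transpose B *v v = 0" and "v \<noteq> 0"
  shows "\<exists>v'\<in>{v, - v}. 0 \<le> v' \<bullet> b \<and> (\<exists>l. v' $ l < 0)"
proof (rule ccontr)
  assume "\<not> ?thesis"
  then have v: "0 \<le> v \<bullet> b \<Longrightarrow> \<forall>l. 0 \<le> v $ l"
    and minus_v: "0 \<le> (- v) \<bullet> b \<Longrightarrow> \<forall>l. 0 \<le> (- v) $ l"
    by (auto simp: not_less)
  have "transpose B *v (- v) = 0"
    using Bv by (simp only: matrix_vector_mult_uminus_right) simp
  then have "0 \<le> v \<bullet> b"
    using rec[of "- v"] minus_v by fastforce
  then have "v \<bullet> b = 0"
    using rec[OF v Bv] by simp
  then have "\<forall>l. v $ l = 0"
    using v minus_v by (simp add: order_antisym)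
  with \<open>v \<noteq> 0\<close> show False
    by (simp add: vec_eq_iff)
qed

text \<open>
  Induction on the support of w: a non-extreme point is moved along a null direction of
  B^T, signed so that w \<bullet> b does not decrease, until one more coordinate vanishes.
\<close>

lemma dual_set_extreme_point_ge:
  fixes B :: "real^'n::finite^'m::finite"
  assumes rec: "\<And>v. \<forall>l. 0 \<le> v $ l \<Longrightarrow> transpose B *v v = 0 \<Longrightarrow> v \<bullet> b \<le> 0"
    and "w \<in> dual_set B d"
  shows "\<exists>w'. w' extreme_point_of dual_set B d \<and> w \<bullet> b \<le> w' \<bullet> b"
  using assms(2)
proof (induction "card {l. w $ l \<noteq> 0}" arbitrary: w rule: less_induct)
  case less
  show ?case
  proof (cases "w extreme_point_of dual_set B d")
    case False
    obtain v where v: "v \<noteq> 0" "transpose B *v v = 0" "\<forall>l. w $ l = 0 \<longrightarrow> v $ l = 0"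
      using dual_set_non_extreme_point_direction[OF less.prems False] by blast
    obtain v' l0 where v': "v' \<in> {v, - v}" "0 \<le> v' \<bullet> b" "v' $ l0 < 0"
      using recession_direction_sign[OF rec v(2,1)] by blast
    have Bv': "transpose B *v v' = 0" and supp: "\<forall>l. w $ l = 0 \<longrightarrow> v' $ l = 0"
      using v v' by (auto simp only: matrix_vector_mult_uminus_right) auto
    obtain t where t: "0 \<le> t" "\<forall>l. 0 \<le> (w + t *\<^sub>R v') $ l"
      "{l. (w + t *\<^sub>R v') $ l \<noteq> 0} \<subset> {l. w $ l \<noteq> 0}"
      using nonneg_add_ray_shrinks_support[OF _ v'(3) supp] less.prems
      by (auto simp: dual_set_def)
    have "w + t *\<^sub>R v' \<in> dual_set B d"
      using t(2) less.prems Bv'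
      by (simp add: dual_set_def matrix_vector_right_distrib matrix_vector_mult_scaleR
          del: transpose_matrix_vector)
    moreover have "card {l. (w + t *\<^sub>R v') $ l \<noteq> 0} < card {l. w $ l \<noteq> 0}"
      using t(3) by (simp add: psubset_card_mono)
    moreover have "w \<bullet> b \<le> (w + t *\<^sub>R v') \<bullet> b"
      using t(1) v'(2) by (simp add: inner_add_left)
    ultimately show ?thesis
      using less.hyps by (meson order_trans)
  qed blast
qed

lemma lp_duality_extreme_points:
  fixes B :: "real^'n::finite^'m::finite"
  assumes feasible: "\<forall>l. b $ l \<le> (B *v y0) $ l"
    and extreme_bound: "\<And>w. w extreme_point_of dual_set B d \<Longrightarrow> w \<bullet> b \<le> s"
  shows "\<exists>y. (\<forall>l. b $ l \<le> (B *v y) $ l) \<and> d \<bullet> y \<le> s"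
proof (rule ccontr)
  assume "\<not> ?thesis"
  then obtain w \<mu> where w: "\<forall>l. 0 \<le> w $ l" "0 \<le> \<mu>" "transpose B *v w = \<mu> *\<^sub>R d" "\<mu> * s < w \<bullet> b"
    using farkas_inequality_system by blast
  have rec: "v \<bullet> b \<le> 0" if "\<forall>l. 0 \<le> v $ l" "transpose B *v v = 0" for v
    using inner_le_transpose_mult_inner[OF that(1) feasible] that(2) by simp
  show False
  proof (cases "\<mu> = 0")
    case True
    with w rec[of w] show False by simp
  next
    case False
    with w have "(1 / \<mu>) *\<^sub>R w \<in> dual_set B d" "s < ((1 / \<mu>) *\<^sub>R w) \<bullet> b"
      by (simp_all add: dual_set_def matrix_vector_mult_scaleR field_simps
          del: transpose_matrix_vector)
    then obtain w' where "w' extreme_point_of dual_set B d" "s < w' \<bullet> b"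
      using dual_set_extreme_point_ge[OF rec] by (meson less_le_trans)
    with extreme_bound show False
      by (meson not_le)
  qed
qed

section \<open>The dual of the copositive cone\<close>

lemma convex_cone_hull_image_explicit:
  fixes g :: "'a \<Rightarrow> 'b::real_vector"
  assumes "Y \<in> convex_cone hull (g ` K)"
  shows "\<exists>Z \<mu>. finite Z \<and> Z \<subseteq> K \<and> (\<forall>z\<in>Z. 0 \<le> \<mu> z) \<and> Y = (\<Sum>z\<in>Z. \<mu> z *\<^sub>R g z)"
proof (cases "Y = 0")
  case True
  then show ?thesis by (intro exI[of _ "{}"]) simp
next
  case False
  then obtain c X where "0 \<le> c" "Y = c *\<^sub>R X" "X \<in> convex hull (g ` K)"
    using assms by (auto simp: convex_cone_hull_convex_hull)
  then obtain T u where T: "finite T" "T \<subseteq> g ` K" "\<forall>X\<in>T. 0 \<le> u X"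
    and Y: "Y = c *\<^sub>R (\<Sum>X\<in>T. u X *\<^sub>R X)"
    by (auto simp: convex_hull_explicit)
  define f where "f = inv_into K g"
  have f: "f X \<in> K" "g (f X) = X" if "X \<in> T" for X
    using T(2) that by (auto simp: f_def inv_into_into f_inv_into_f)
  then have "inj_on f T"
    by (metis inj_onI)
  have "Y = (\<Sum>X\<in>T. (c * u (g (f X))) *\<^sub>R g (f X))"
    unfolding Y by (simp add: scaleR_sum_right f(2))
  also have "\<dots> = (\<Sum>z\<in>f ` T. (c * u (g z)) *\<^sub>R g z)"
    using \<open>inj_on f T\<close> by (simp add: sum.reindex)
  finally show ?thesis
    using T \<open>0 \<le> c\<close> f by (intro exI[of _ "f ` T"] exI[of _ "\<lambda>z. c * u (g z)"]) auto
qed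

text \<open>
  The matrices z z^T with |z| = 1 form a compact set of trace one, hence a base not
  containing 0, so the cone they generate is closed.
\<close>

lemma closed_convex_cone_hull_outer:
  fixes K :: "(real^'n::finite) set"
  assumes "closed K" "cone K"
  shows "closed (convex_cone hull (outer ` K))"
proof -
  define S where "S = outer ` (K \<inter> sphere 0 1)"
  have "outer z \<in> convex_cone hull S" if "z \<in> K" for z
  proof (cases "z = 0")
    case True
    then show ?thesis by (simp add: convex_cone_hull_contains_0)
  next
    case False
    then have "outer ((1 / norm z) *\<^sub>R z) \<in> S"
      using assms(2) that by (simp add: S_def cone_def)
    then have "(norm z)\<^sup>2 *\<^sub>R outer ((1 / norm z) *\<^sub>R z) \<in> convex_cone hull S"
      by (simp add: convex_cone_hull_mul hull_inc)
    with False show ?thesis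
      by (simp add: outer_scaleR power_one_over)
  qed
  then have "convex_cone hull (outer ` K) = convex_cone hull S"
    by (intro antisym hull_minimal hull_mono)
      (auto simp: S_def convex_cone_convex_cone_hull)
  moreover have "0 \<notin> convex hull S"
  proof -
    have "convex hull S \<subseteq> {X. mat 1 \<bullet> X = 1}"
      by (rule hull_minimal) (auto simp: S_def mat_1_inner_outer convex_hyperplane)
    then show ?thesis by auto
  qed
  moreover have "compact S"
    unfolding S_def using assms(1)
    by (intro compact_continuous_image continuous_on_outer closed_Int_compact compact_sphere)
  ultimately show ?thesis
    by (simp add: convex_cone_hull_separate closed_conic_hull compact_convex_hull)
qed

lemma copositive_dual_in_convex_cone_hull_outer:
  fixes K :: "(real^'n::finite) set"
  assumes "closed K" "cone K" "transpose Y = Y" and dual: "\<And>N. N \<in> copositive K \<Longrightarrow> 0 \<le> Y \<bullet> N"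
  shows "Y \<in> convex_cone hull (outer ` K)"
proof (rule ccontr)
  assume "Y \<notin> convex_cone hull (outer ` K)"
  then obtain H where H: "H \<bullet> Y < 0" "\<forall>X\<in>convex_cone hull (outer ` K). 0 \<le> H \<bullet> X"
    using separating_hyperplane_closed_convex_cone[OF closed_convex_cone_hull_outer[OF assms(1,2)]
        convex_cone_convex_cone_hull] by blast
  have "H + transpose H \<in> copositive K"
    using H(2) hull_inc[of _ "outer ` K" convex_cone]
    by (auto simp: copositive_iff_inner_outer transpose_add inner_add_left transpose_inner_outer)
  then have "0 \<le> Y \<bullet> (H + transpose H)"
    by (rule dual)
  moreover have "Y \<bullet> transpose H = H \<bullet> Y"
    using inner_transpose_transpose[of Y "transpose H"] assms(3) by (simp add: inner_commute)
  ultimately show False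
    using H(1) by (simp add: inner_add_right inner_commute)
qed

section \<open>The lifted cone on the kernel of E\<close>

lemma unc_set_recession_cone_trivial:
  assumes cone: "cone Uh" and conv: "convex Uh"
    and U_ne: "unc_set i1 Uh \<noteq> {}" and U_compact: "compact (unc_set i1 Uh)"
    and u: "u \<in> Uh" "u $ i1 = 0"
  shows "u = 0"
proof (rule ccontr)
  assume "u \<noteq> 0"
  obtain u0 where u0: "u0 \<in> Uh" "u0 $ i1 = 1"
    using U_ne unfolding unc_set_def by blast
  obtain M where M: "\<forall>v\<in>unc_set i1 Uh. norm v \<le> M"
    using compact_imp_bounded[OF U_compact] unfolding bounded_iff by blast
  have ray: "u0 + s *\<^sub>R u \<in> unc_set i1 Uh" if "0 \<le> s" for s
  proof -
    have "2 *\<^sub>R u0 \<in> Uh" "(2 * s) *\<^sub>R u \<in> Uh"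
      using cone u0 u that unfolding cone_def by auto
    then have "(1/2) *\<^sub>R (2 *\<^sub>R u0) + (1/2) *\<^sub>R ((2 * s) *\<^sub>R u) \<in> Uh"
      by (intro convexD[OF conv]) auto
    then show ?thesis
      using u0 u by (simp add: unc_set_def)
  qed
  define s where "s = (M + norm u0 + 1) / norm u"
  have "u0 \<in> unc_set i1 Uh"
    using ray[of 0] by simp
  then have "0 \<le> M"
    using M by (meson norm_ge_zero order_trans)
  then have "0 \<le> s" by (simp add: s_def)
  have "s * norm u \<le> norm (u0 + s *\<^sub>R u) + norm u0"
    using norm_triangle_ineq4[of "u0 + s *\<^sub>R u" u0] \<open>0 \<le> s\<close> by simp
  also have "\<dots> \<le> M + norm u0"
    using M ray[OF \<open>0 \<le> s\<close>] by simp
  finally show False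
    using \<open>u \<noteq> 0\<close> by (simp add: s_def)
qed

text \<open>
  A point (u; w) of the cone with E (u; w) = 0 has B^Tw = u_1 d, so for u_1 > 0 it is
  u_1 times a point of U \<times> W, while u_1 = 0 forces u = 0.
\<close>

lemma Gmat_inner_outer_le_on_kernel:
  assumes cone: "cone Uh" and conv: "convex Uh" and orthant: "\<forall>u\<in>Uh. 0 \<le> u $ i1"
    and U_ne: "unc_set i1 Uh \<noteq> {}" and U_compact: "compact (unc_set i1 Uh)"
    and bound: "\<forall>u\<in>unc_set i1 Uh. \<forall>w\<in>dual_set B d. w \<bullet> (F *v u - A *v x) \<le> t"
    and z: "z \<in> prod_cone Uh" "Emat i1 d B *v z = 0"
  shows "Gmat i1 A F x \<bullet> outer z \<le> 2 * t * (g1 i1 \<bullet> z)\<^sup>2"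
proof -
  define u w where "u = (\<chi> i. z $ Inl i)" and "w = (\<chi> l. z $ Inr l)"
  have z_eq: "z = join_vec u w"
    unfolding u_def w_def by (rule join_vec_split)
  have "u \<in> Uh" "\<forall>l. 0 \<le> w $ l"
    using z(1) unfolding z_eq join_vec_in_prod_cone by auto
  have Bw: "transpose B *v w = u $ i1 *\<^sub>R d"
    using z(2) unfolding z_eq Emat_join_vec by (simp del: transpose_matrix_vector)
  have "w \<bullet> (F *v u) - (w \<bullet> (A *v x)) * u $ i1 \<le> t * (u $ i1)\<^sup>2"
  proof (cases "u $ i1 = 0")
    case True
    then show ?thesis
      using unc_set_recession_cone_trivial[OF cone conv U_ne U_compact \<open>u \<in> Uh\<close>] by simp
  next
    case False
    with orthant \<open>u \<in> Uh\<close> have pos: "0 < u $ i1"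
      by force
    define c where "c = u $ i1"
    have "(1 / c) *\<^sub>R u \<in> unc_set i1 Uh"
      using cone \<open>u \<in> Uh\<close> pos unfolding unc_set_def cone_def c_def by simp
    moreover have "(1 / c) *\<^sub>R w \<in> dual_set B d"
      using Bw pos \<open>\<forall>l. 0 \<le> w $ l\<close>
      by (simp add: dual_set_def matrix_vector_mult_scaleR c_def del: transpose_matrix_vector)
    ultimately have "((1 / c) *\<^sub>R w) \<bullet> (F *v ((1 / c) *\<^sub>R u) - A *v x) \<le> t"
      using bound by blast
    then have "c\<^sup>2 * (((1 / c) *\<^sub>R w) \<bullet> (F *v ((1 / c) *\<^sub>R u) - A *v x)) \<le> c\<^sup>2 * t"
      by (rule mult_left_mono) simp
    moreover have "c\<^sup>2 * (((1 / c) *\<^sub>R w) \<bullet> (F *v ((1 / c) *\<^sub>R u) - A *v x))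
        = w \<bullet> (F *v u) - (w \<bullet> (A *v x)) * u $ i1"
      using pos unfolding c_def
      by (simp add: matrix_vector_mult_scaleR inner_diff_right power2_eq_square field_simps)
    ultimately show ?thesis
      by (simp add: c_def ac_simps)
  qed
  then show ?thesis
    unfolding z_eq Gmat_inner_outer_join_vec g1_inner_join_vec by simp
qed

lemma symmetric_if_orthogonal_to_skew:
  fixes Y :: "real^'n::finite^'n"
  assumes "\<And>Q. transpose Q = - Q \<Longrightarrow> Y \<bullet> Q = 0"
  shows "transpose Y = Y"
proof -
  have "Y \<bullet> (Y - transpose Y) = 0"
    by (rule assms) (simp add: transpose_diff)
  moreover have "(Y - transpose Y) \<bullet> (Y - transpose Y) = 2 * (Y \<bullet> (Y - transpose Y))"
    using inner_transpose_transpose[of Y Y]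
    by (simp add: inner_diff_left inner_diff_right inner_commute)
  ultimately show ?thesis by simp
qed

section \<open>Lagrange multipliers of the copositive program\<close>

text \<open>
  The slack \<sigma> and the skew-symmetric part Q force every functional (\<alpha>, -Y) that is
  nonnegative on this set to have \<alpha> \<ge> 0 and Y symmetric.
\<close>

definition cop_residual_set ::
  "'k::finite \<Rightarrow> real^'n2::finite \<Rightarrow> real^'n1::finite^'m::finite \<Rightarrow> real^'n2^'m \<Rightarrow> real^'k^'m
    \<Rightarrow> real^'n1 \<Rightarrow> real \<Rightarrow> real \<Rightarrow> (real^('k + 'm)) set \<Rightarrow> (real \<times> (real^('k + 'm)^('k + 'm))) set" where
  "cop_residual_set i1 d A B F x r s K =
     {(lam + r * rho + \<sigma> - s, cop_matrix i1 d A B F x lam Lam rho - N + Q) | lam Lam rho \<sigma> N Q.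
        0 \<le> rho \<and> 0 \<le> \<sigma> \<and> N \<in> copositive K \<and> transpose Q = - Q}"

lemma cop_residual_setI:
  "0 \<le> rho \<Longrightarrow> 0 \<le> \<sigma> \<Longrightarrow> N \<in> copositive K \<Longrightarrow> transpose Q = - Q \<Longrightarrow>
    (lam + r * rho + \<sigma> - s, cop_matrix i1 d A B F x lam Lam rho - N + Q)
      \<in> cop_residual_set i1 d A B F x r s K"
  unfolding cop_residual_set_def by blast

lemma zero_notin_cop_residual_set:
  assumes infeasible: "\<nexists>lam Lam rho. 0 \<le> rho \<and> cop_matrix i1 d A B F x lam Lam rho \<in> copositive K
      \<and> lam + r * rho \<le> s"
  shows "0 \<notin> cop_residual_set i1 d A B F x r s K"
proof
  assume "0 \<in> cop_residual_set i1 d A B F x r s K"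
  then obtain lam Lam rho \<sigma> N Q where "0 \<le> rho" "0 \<le> \<sigma>" "N \<in> copositive K" "transpose Q = - Q"
    and "(lam + r * rho + \<sigma> - s, cop_matrix i1 d A B F x lam Lam rho - N + Q) = 0"
    unfolding cop_residual_set_def by auto
  then have "lam + r * rho + \<sigma> = s" and Q: "Q = N - cop_matrix i1 d A B F x lam Lam rho"
    by (simp_all add: zero_prod_def algebra_simps)
  moreover have "transpose Q = Q"
    using \<open>N \<in> copositive K\<close>
    by (simp add: Q transpose_diff transpose_cop_matrix copositive_iff_inner_outer)
  then have "Q + Q = 0"
    using \<open>transpose Q = - Q\<close> by simp
  then have "Q = 0"
    by (simp flip: scaleR_2)
  ultimately have "cop_matrix i1 d A B F x lam Lam rho \<in> copositive K" "lam + r * rho \<le> s"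
    using \<open>N \<in> copositive K\<close> \<open>0 \<le> \<sigma>\<close> by auto
  with infeasible \<open>0 \<le> rho\<close> show False
    by blast
qed

lemma convex_cop_residual_set: "convex (cop_residual_set i1 d A B F x r s K)"
proof (rule convexI)
  fix p1 p2 and u v :: real
  assume "p1 \<in> cop_residual_set i1 d A B F x r s K" "p2 \<in> cop_residual_set i1 d A B F x r s K"
    and uv: "0 \<le> u" "0 \<le> v" "u + v = 1"
  then obtain l1 L1 r1 s1 N1 Q1 l2 L2 r2 s2 N2 Q2 where
    p: "p1 = (l1 + r * r1 + s1 - s, cop_matrix i1 d A B F x l1 L1 r1 - N1 + Q1)"
       "p2 = (l2 + r * r2 + s2 - s, cop_matrix i1 d A B F x l2 L2 r2 - N2 + Q2)"
    and c: "0 \<le> r1" "0 \<le> s1" "N1 \<in> copositive K" "transpose Q1 = - Q1"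
      "0 \<le> r2" "0 \<le> s2" "N2 \<in> copositive K" "transpose Q2 = - Q2"
    unfolding cop_residual_set_def by blast
  have "u * (l1 + r * r1 + s1 - s) + v * (l2 + r * r2 + s2 - s)
      = (u * l1 + v * l2) + r * (u * r1 + v * r2) + (u * s1 + v * s2) - s"
    using uv(3) by (simp add: algebra_simps) (metis distrib_left mult.right_neutral)
  moreover have "u *\<^sub>R (cop_matrix i1 d A B F x l1 L1 r1 - N1 + Q1)
      + v *\<^sub>R (cop_matrix i1 d A B F x l2 L2 r2 - N2 + Q2)
      = cop_matrix i1 d A B F x (u * l1 + v * l2) (u *\<^sub>R L1 + v *\<^sub>R L2) (u * r1 + v * r2)
        - (u *\<^sub>R N1 + v *\<^sub>R N2) + (u *\<^sub>R Q1 + v *\<^sub>R Q2)"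
    unfolding cop_matrix_affine[OF uv(3), symmetric] by (simp add: algebra_simps)
  moreover have "u *\<^sub>R N1 + v *\<^sub>R N2 \<in> copositive K"
    using convex_copositive c(3,7) uv by (rule convexD)
  ultimately show "u *\<^sub>R p1 + v *\<^sub>R p2 \<in> cop_residual_set i1 d A B F x r s K"
    unfolding p using c uv
    by (auto simp: transpose_add transpose_scalar intro!: cop_residual_setI)
qed

lemma cop_infeasible_separation:
  assumes "\<nexists>lam Lam rho. 0 \<le> rho \<and> cop_matrix i1 d A B F x lam Lam rho \<in> copositive K
      \<and> lam + r * rho \<le> s"
  shows "\<exists>\<alpha> Y. (\<alpha>, Y) \<noteq> 0 \<and> (\<forall>p\<in>cop_residual_set i1 d A B F x r s K. 0 \<le> (\<alpha>, - Y) \<bullet> p)"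
proof -
  obtain a where "a \<noteq> 0" "\<forall>p\<in>cop_residual_set i1 d A B F x r s K. 0 \<le> a \<bullet> p"
    using separating_hyperplane_set_0[OF convex_cop_residual_set
        zero_notin_cop_residual_set[OF assms]]
    by blast
  then show ?thesis
    by (intro exI[of _ "fst a"] exI[of _ "- snd a"]) (simp add: prod_eq_iff)
qed

lemma cop_multiplier_inequality:
  assumes "\<forall>p\<in>cop_residual_set i1 d A B F x r s K. 0 \<le> (\<alpha>, - Y) \<bullet> p"
    and "0 \<le> rho" "0 \<le> \<sigma>" "N \<in> copositive K" "transpose Q = - Q"
  shows "0 \<le> ((1/2) * (Y \<bullet> Gmat i1 A F x) - \<alpha> * s) + lam * (\<alpha> - Y \<bullet> outer (g1 i1))
    + rho * (\<alpha> * r - Y \<bullet> mat 1) + \<sigma> * \<alpha> + Y \<bullet> N - Y \<bullet> Q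
    - (1/2) * (Y \<bullet> transpose (Lam ** Emat i1 d B) + Y \<bullet> (Lam ** Emat i1 d B))"
proof -
  have "0 \<le> (\<alpha>, - Y) \<bullet> (lam + r * rho + \<sigma> - s, cop_matrix i1 d A B F x lam Lam rho - N + Q)"
    using assms(1) cop_residual_setI[OF assms(2-5)] by blast
  then show ?thesis
    by (simp add: inner_cop_matrix inner_add_right inner_diff_right algebra_simps)
qed

text \<open>
  Each free variable of the residual set enters the inequality above linearly, and the
  right-hand side stays nonnegative as that variable tends to infinity; this pins down the
  sign of its coefficient.
\<close>

lemma cop_multiplier_scalar_conditions:
  fixes K :: "(real^('k::finite + 'm::finite)) set"
  assumes multiplier: "\<forall>p\<in>cop_residual_set i1 d A B F x r s K. 0 \<le> (\<alpha>, - Y) \<bullet> p"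
  shows "0 \<le> \<alpha>" "2 * \<alpha> * s \<le> Y \<bullet> Gmat i1 A F x" "Y \<bullet> outer (g1 i1) = \<alpha>" "Y \<bullet> mat 1 \<le> \<alpha> * r"
proof -
  define c0 where "c0 = (1/2) * (Y \<bullet> Gmat i1 A F x) - \<alpha> * s"
  note ineq = cop_multiplier_inequality[OF multiplier, folded c0_def]
  have z: "0 \<le> (0::real)" "0 \<in> copositive K" "transpose 0 = - (0::real^('k + 'm)^('k + 'm))"
    by (simp_all add: zero_in_copositive transpose_zero)
  show "0 \<le> \<alpha>"
  proof (rule affine_nonneg_imp_slope_nonneg)
    fix t :: real assume "0 \<le> t"
    from ineq[OF z(1) this z(2,3), of 0 0] show "0 \<le> c0 + t * \<alpha>" by (simp add: transpose_zero)
  qed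
  show "2 * \<alpha> * s \<le> Y \<bullet> Gmat i1 A F x"
    using ineq[OF z(1,1,2,3), of 0 0] by (simp add: c0_def transpose_zero)
  have "\<alpha> - Y \<bullet> outer (g1 i1) = 0"
  proof (rule affine_nonneg_imp_slope_eq_0)
    fix t :: real
    from ineq[OF z(1,1,2,3), of t 0] show "0 \<le> c0 + t * (\<alpha> - Y \<bullet> outer (g1 i1))"
      by (simp add: transpose_zero)
  qed
  then show "Y \<bullet> outer (g1 i1) = \<alpha>" by simp
  have "0 \<le> \<alpha> * r - Y \<bullet> mat 1"
  proof (rule affine_nonneg_imp_slope_nonneg)
    fix t :: real assume "0 \<le> t"
    from ineq[OF this z(1,2,3), of 0 0] show "0 \<le> c0 + t * (\<alpha> * r - Y \<bullet> mat 1)"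
      by (simp add: transpose_zero)
  qed
  then show "Y \<bullet> mat 1 \<le> \<alpha> * r" by simp
qed

lemma cop_multiplier_symmetric:
  fixes K :: "(real^('k::finite + 'm::finite)) set"
  assumes multiplier: "\<forall>p\<in>cop_residual_set i1 d A B F x r s K. 0 \<le> (\<alpha>, - Y) \<bullet> p"
  shows "transpose Y = Y"
proof (rule symmetric_if_orthogonal_to_skew)
  fix Q :: "real^('k + 'm)^('k + 'm)"
  assume skew: "transpose Q = - Q"
  have "- (Y \<bullet> Q) = 0"
  proof (rule affine_nonneg_imp_slope_eq_0)
    fix t :: real
    from skew have "transpose (t *\<^sub>R Q) = - (t *\<^sub>R Q)"
      by (simp add: transpose_scalar)
    from cop_multiplier_inequality[OF multiplier order_refl order_refl zero_in_copositive this,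
        of 0 0]
    show "0 \<le> ((1/2) * (Y \<bullet> Gmat i1 A F x) - \<alpha> * s) + t * - (Y \<bullet> Q)"
      by (simp add: transpose_zero)
  qed
  then show "Y \<bullet> Q = 0" by simp
qed

lemma cop_multiplier_dual_conditions:
  fixes K :: "(real^('k::finite + 'm::finite)) set"
  assumes multiplier: "\<forall>p\<in>cop_residual_set i1 d A B F x r s K. 0 \<le> (\<alpha>, - Y) \<bullet> p"
  shows "\<forall>N\<in>copositive K. 0 \<le> Y \<bullet> N" "Y \<bullet> (transpose (Emat i1 d B) ** Emat i1 d B) = 0"
proof -
  define c0 where "c0 = (1/2) * (Y \<bullet> Gmat i1 A F x) - \<alpha> * s"
  define E where "E = Emat i1 d B"
  note ineq = cop_multiplier_inequality[OF multiplier, folded c0_def E_def]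
  have z: "0 \<le> (0::real)" "0 \<in> copositive K" "transpose 0 = - (0::real^('k + 'm)^('k + 'm))"
    by (simp_all add: zero_in_copositive transpose_zero)
  show "\<forall>N\<in>copositive K. 0 \<le> Y \<bullet> N"
  proof
    fix N assume "N \<in> copositive K"
    show "0 \<le> Y \<bullet> N"
    proof (rule affine_nonneg_imp_slope_nonneg)
      fix t :: real assume "0 \<le> t"
      with \<open>N \<in> copositive K\<close> have "t *\<^sub>R N \<in> copositive K"
        using cone_copositive[of K] unfolding cone_def by blast
      from ineq[OF z(1,1) this z(3), of 0 0] show "0 \<le> c0 + t * (Y \<bullet> N)"
        by (simp add: transpose_zero)
    qed
  qed
  have "- (Y \<bullet> (transpose E ** E)) = 0"
  proof (rule affine_nonneg_imp_slope_eq_0)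
    fix t :: real
    have "transpose ((t *\<^sub>R transpose E) ** E) = (t *\<^sub>R transpose E) ** E"
      by (simp add: matrix_transpose_mul transpose_scalar matrix_scalar_ac)
    with ineq[OF z(1,1,2,3), of 0 "t *\<^sub>R transpose E"]
    show "0 \<le> c0 + t * - (Y \<bullet> (transpose E ** E))"
      by (simp add: transpose_zero scalar_matrix_assoc[symmetric])
  qed
  then show "Y \<bullet> (transpose E ** E) = 0" by simp
qed

section \<open>Strong duality\<close>

lemma Gmat_inner_sum_outer_le:
  assumes cone: "cone Uh" and conv: "convex Uh" and orthant: "\<forall>u\<in>Uh. 0 \<le> u $ i1"
    and U_ne: "unc_set i1 Uh \<noteq> {}" and U_compact: "compact (unc_set i1 Uh)"
    and bound: "\<forall>u\<in>unc_set i1 Uh. \<forall>w\<in>dual_set B d. w \<bullet> (F *v u - A *v x) \<le> t"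
    and Z: "finite Z" "Z \<subseteq> prod_cone Uh" "\<forall>z\<in>Z. 0 \<le> \<mu> z"
    and kernel: "(\<Sum>z\<in>Z. \<mu> z *\<^sub>R outer z) \<bullet> (transpose (Emat i1 d B) ** Emat i1 d B) = 0"
  shows "(\<Sum>z\<in>Z. \<mu> z *\<^sub>R outer z) \<bullet> Gmat i1 A F x \<le> 2 * t * ((\<Sum>z\<in>Z. \<mu> z *\<^sub>R outer z) \<bullet> outer (g1 i1))"
proof -
  let ?Ez = "\<lambda>z. Emat i1 d B *v z"
  have "(\<Sum>z\<in>Z. \<mu> z * (?Ez z \<bullet> ?Ez z)) = 0"
    using kernel by (simp add: inner_sum_outer transpose_mult_self_inner_outer)
  then have "\<forall>z\<in>Z. \<mu> z * (?Ez z \<bullet> ?Ez z) = 0"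
    using Z by (simp add: sum_nonneg_eq_0_iff)
  then have "\<mu> z * (Gmat i1 A F x \<bullet> outer z) \<le> \<mu> z * (2 * t * (outer (g1 i1) \<bullet> outer z))"
    if "z \<in> Z" for z
    using that Z Gmat_inner_outer_le_on_kernel[OF cone conv orthant U_ne U_compact bound, of z]
    by (cases "\<mu> z = 0") (auto simp: outer_inner_outer intro: mult_left_mono)
  then show ?thesis
    by (simp add: inner_sum_outer sum_distrib_left mult.left_commute sum_mono)
qed

lemma cop_feasible_near_worst_case:
  fixes Uh :: "(real^'k::finite) set" and B :: "real^'n2::finite^'m::finite"
  assumes Uh: "closed Uh" "convex Uh" "cone Uh" "\<forall>u\<in>Uh. 0 \<le> u $ i1"
    and U: "unc_set i1 Uh \<noteq> {}" "compact (unc_set i1 Uh)"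
    and bound: "\<forall>u\<in>unc_set i1 Uh. \<forall>w\<in>dual_set B d. w \<bullet> (F *v u - A *v x) \<le> t"
    and "0 < \<epsilon>"
  shows "\<exists>lam Lam rho. 0 \<le> rho \<and> cop_matrix i1 d A B F x lam Lam rho \<in> copositive (prod_cone Uh)
    \<and> lam + r * rho \<le> t + \<epsilon>"
proof (rule ccontr)
  let ?K = "prod_cone Uh :: (real^('k + 'm)) set"
  assume infeasible: "\<not> ?thesis"
  then obtain \<alpha> Y where nonzero: "(\<alpha>, Y) \<noteq> 0"
    and multiplier: "\<forall>p\<in>cop_residual_set i1 d A B F x r (t + \<epsilon>) ?K. 0 \<le> (\<alpha>, - Y) \<bullet> p"
    using cop_infeasible_separation[OF infeasible] by blast
  note scalar = cop_multiplier_scalar_conditions[OF multiplier]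
    and dual = cop_multiplier_dual_conditions[OF multiplier]
  have "Y \<in> convex_cone hull (outer ` ?K)"
    using copositive_dual_in_convex_cone_hull_outer[OF closed_prod_cone[OF Uh(1)]
        cone_prod_cone[OF Uh(3)] cop_multiplier_symmetric[OF multiplier]] dual(1) by blast
  then obtain Z \<mu> where Z: "finite Z" "Z \<subseteq> ?K" "\<forall>z\<in>Z. 0 \<le> \<mu> z"
    and Y: "Y = (\<Sum>z\<in>Z. \<mu> z *\<^sub>R outer z)"
    by (blast dest: convex_cone_hull_image_explicit)
  have "2 * \<alpha> * (t + \<epsilon>) \<le> 2 * t * \<alpha>"
    using scalar(2,3) dual(2) Gmat_inner_sum_outer_le[OF Uh(3,2,4) U bound Z] by (simp add: Y)
  with scalar(1) \<open>0 < \<epsilon>\<close> have "\<alpha> = 0"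
    by (simp add: algebra_simps mult_le_0_iff)
  with scalar(4) have "(\<Sum>z\<in>Z. \<mu> z * (norm z)\<^sup>2) \<le> 0"
    by (simp add: Y inner_sum_outer mat_1_inner_outer)
  moreover have "0 \<le> (\<Sum>z\<in>Z. \<mu> z * (norm z)\<^sup>2)"
    using Z by (simp add: sum_nonneg)
  ultimately have "\<forall>z\<in>Z. \<mu> z * (norm z)\<^sup>2 = 0"
    using Z by (simp add: sum_nonneg_eq_0_iff)
  then have "Y = 0"
    unfolding Y by (intro sum.neutral) auto
  with \<open>\<alpha> = 0\<close> nonzero show False
    by (simp add: zero_prod_def)
qed

lemma dual_set_inner_le_recourse_cost:
  assumes "w \<in> dual_set B d" "\<forall>l. b $ l \<le> (B *v y) $ l"
  shows "w \<bullet> b \<le> d \<bullet> y"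
  using inner_le_transpose_mult_inner[of w b B y] assms
  by (simp add: dual_set_def del: transpose_matrix_vector)

lemma rlp_bar_value_le_worst_case:
  assumes Uh: "closed Uh" "convex Uh" "cone Uh" "\<forall>u\<in>Uh. 0 \<le> u $ i1"
    and U: "unc_set i1 Uh \<noteq> {}" "compact (unc_set i1 Uh)"
    and "x \<in> X" and bound: "\<forall>u\<in>unc_set i1 Uh. \<forall>w\<in>dual_set B d. w \<bullet> (F *v u - A *v x) \<le> t"
  shows "rlp_bar_value i1 X c d A B F Uh r \<le> ereal (c \<bullet> x + t)"
proof (rule ereal_le_epsilon2)
  fix \<epsilon> :: real assume "0 < \<epsilon>"
  then obtain lam Lam rho where "0 \<le> rho" "lam + r * rho \<le> t + \<epsilon>"
    "cop_matrix i1 d A B F x lam Lam rho \<in> copositive (prod_cone Uh)"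
    using cop_feasible_near_worst_case[OF Uh U bound] by blast
  then have "rlp_bar_value i1 X c d A B F Uh r \<le> ereal (c \<bullet> x + lam + r * rho)"
    unfolding rlp_bar_value_def using \<open>x \<in> X\<close> by (intro Inf_lower) blast
  also have "\<dots> \<le> ereal (c \<bullet> x + t) + ereal \<epsilon>"
    using \<open>lam + r * rho \<le> t + \<epsilon>\<close> by simp
  finally show "rlp_bar_value i1 X c d A B F Uh r \<le> ereal (c \<bullet> x + t) + ereal \<epsilon>" .
qed

lemma rlp_bar_value_le_rlp_value:
  assumes Uh: "closed Uh" "convex Uh" "cone Uh" "\<forall>u\<in>Uh. 0 \<le> u $ i1"
    and U: "unc_set i1 Uh \<noteq> {}" "compact (unc_set i1 Uh)"
  shows "rlp_bar_value i1 X c d A B F Uh r \<le> rlp_value X c d A B F (unc_set i1 Uh)"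
  unfolding rlp_value_def
proof (rule Inf_greatest, safe)
  fix x y
  assume "x \<in> X" and feasible: "\<forall>u\<in>unc_set i1 Uh. \<forall>l. (F *v u) $ l \<le> (A *v x + B *v y u) $ l"
  let ?cost = "SUP u\<in>unc_set i1 Uh. ereal (d \<bullet> y u)"
  show "rlp_bar_value i1 X c d A B F Uh r \<le> ereal (c \<bullet> x) + ?cost"
  proof (cases ?cost)
    case (real t)
    have "w \<bullet> (F *v u - A *v x) \<le> t" if "u \<in> unc_set i1 Uh" "w \<in> dual_set B d" for u w
    proof -
      have "w \<bullet> (F *v u - A *v x) \<le> d \<bullet> y u"
        using feasible that by (intro dual_set_inner_le_recourse_cost) (auto simp: algebra_simps)
      also have "ereal (d \<bullet> y u) \<le> ?cost"
        using that(1) by (rule SUP_upper)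
      finally show ?thesis
        using real by simp
    qed
    then have "rlp_bar_value i1 X c d A B F Uh r \<le> ereal (c \<bullet> x + t)"
      using rlp_bar_value_le_worst_case[OF Uh U \<open>x \<in> X\<close>] by blast
    then show ?thesis
      using real by simp
  next
    case MInf
    obtain u where "u \<in> unc_set i1 Uh"
      using U(1) by blast
    then have "ereal (d \<bullet> y u) \<le> ?cost"
      by (rule SUP_upper)
    with MInf show ?thesis
      by simp
  qed simp
qed

lemma cop_feasible_recourse:
  assumes complete: "\<forall>u\<in>unc_set i1 Uh. \<exists>y. \<forall>l. (B *v y) $ l \<ge> (F *v u - A *v x) $ l"
    and r_bound: "\<forall>u\<in>unc_set i1 Uh. \<forall>w. w extreme_point_of dual_set B d \<longrightarrow>
                    (norm u)\<^sup>2 + (norm w)\<^sup>2 \<le> r"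
    and "0 \<le> rho" and cop: "cop_matrix i1 d A B F x lam Lam rho \<in> copositive (prod_cone Uh)"
    and u: "u \<in> unc_set i1 Uh"
  shows "\<exists>y. (\<forall>l. (F *v u - A *v x) $ l \<le> (B *v y) $ l) \<and> d \<bullet> y \<le> lam + r * rho"
proof -
  obtain y0 where "\<forall>l. (F *v u - A *v x) $ l \<le> (B *v y0) $ l"
    using complete u by blast
  then show ?thesis
  proof (rule lp_duality_extreme_points)
    fix w assume extreme: "w extreme_point_of dual_set B d"
    then have "w \<in> dual_set B d"
      by (simp add: extreme_point_of_def)
    then have "join_vec u w \<in> prod_cone Uh" "transpose B *v w = d"
      using u by (auto simp: join_vec_in_prod_cone dual_set_def unc_set_def)
    then have "0 \<le> cop_matrix i1 d A B F x lam Lam rho \<bullet> outer (join_vec u w)"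
      using cop by (simp add: copositive_iff_inner_outer del: transpose_matrix_vector)
    also have "\<dots> = lam - w \<bullet> (F *v u - A *v x) + rho * ((norm u)\<^sup>2 + (norm w)\<^sup>2)"
      using \<open>transpose B *v w = d\<close> u by (simp add: cop_matrix_inner_outer_join_vec unc_set_def)
    finally have "w \<bullet> (F *v u - A *v x) \<le> lam + rho * ((norm u)\<^sup>2 + (norm w)\<^sup>2)"
      by simp
    moreover have "rho * ((norm u)\<^sup>2 + (norm w)\<^sup>2) \<le> rho * r"
      using r_bound u extreme \<open>0 \<le> rho\<close> by (simp add: mult_left_mono)
    ultimately show "w \<bullet> (F *v u - A *v x) \<le> lam + r * rho"
      by (simp add: mult.commute)
  qed
qed

lemma rlp_value_le_rlp_bar_value:
  assumes complete: "\<forall>x\<in>X. \<forall>u\<in>unc_set i1 Uh. \<exists>y. \<forall>l. (B *v y) $ l \<ge> (F *v u - A *v x) $ l"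
    and r_bound: "\<forall>u\<in>unc_set i1 Uh. \<forall>w. w extreme_point_of dual_set B d \<longrightarrow>
                    (norm u)\<^sup>2 + (norm w)\<^sup>2 \<le> r"
  shows "rlp_value X c d A B F (unc_set i1 Uh) \<le> rlp_bar_value i1 X c d A B F Uh r"
  unfolding rlp_bar_value_def
proof (rule Inf_greatest, safe)
  fix x lam Lam rho
  assume "x \<in> X" "0 \<le> rho"
    and cop: "cop_matrix i1 d A B F x lam Lam rho \<in> copositive (prod_cone Uh)"
  define y where
    "y u = (SOME y. (\<forall>l. (F *v u - A *v x) $ l \<le> (B *v y) $ l) \<and> d \<bullet> y \<le> lam + r * rho)" for u
  have y: "(\<forall>l. (F *v u - A *v x) $ l \<le> (B *v y u) $ l) \<and> d \<bullet> y u \<le> lam + r * rho"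
    if "u \<in> unc_set i1 Uh" for u
    unfolding y_def
    by (rule someI_ex[OF cop_feasible_recourse[OF bspec[OF complete \<open>x \<in> X\<close>] r_bound
          \<open>0 \<le> rho\<close> cop that]])
  have "rlp_value X c d A B F (unc_set i1 Uh)
      \<le> ereal (c \<bullet> x) + (SUP u\<in>unc_set i1 Uh. ereal (d \<bullet> y u))"
    unfolding rlp_value_def using \<open>x \<in> X\<close> y by (intro Inf_lower) (auto simp: algebra_simps)
  also have "\<dots> \<le> ereal (c \<bullet> x) + ereal (lam + r * rho)"
    using y by (intro add_left_mono SUP_least) auto
  finally show "rlp_value X c d A B F (unc_set i1 Uh) \<le> ereal (c \<bullet> x + lam + r * rho)"
    by (simp add: add.assoc)
qed

theorem theorem1:
  fixes X :: "(real^'n1) set" and c :: "real^'n1" and d :: "real^'n2"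
    and A :: "real^'n1^'m" and B :: "real^'n2^'m" and F :: "real^'k^'m"
    and Uh :: "(real^'k) set" and i1 :: 'k and r :: real
  assumes X_closed: "closed X" and X_convex: "convex X"
    and Uh_closed: "closed Uh" and Uh_convex: "convex Uh" and Uh_cone: "cone Uh"
    and Uh_full: "interior Uh \<noteq> {}"
    and Uh_orthant: "\<forall>u\<in>Uh. 0 \<le> u $ i1"
    and U_ne: "unc_set i1 Uh \<noteq> {}" and U_compact: "compact (unc_set i1 Uh)"
    and A2: "\<exists>x y. x \<in> X \<and> (\<forall>u\<in>unc_set i1 Uh. \<forall>l. (A *v x + B *v y u) $ l \<ge> (F *v u) $ l)"
    and A3: "\<bar>rlp_value X c d A B F (unc_set i1 Uh)\<bar> \<noteq> \<infinity>"
    and A4: "\<forall>x\<in>X. \<forall>u\<in>unc_set i1 Uh. \<exists>y. \<forall>l. (B *v y) $ l \<ge> (F *v u - A *v x) $ l"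
    and r_pos: "r > 0"
    and r_bound: "\<forall>u\<in>unc_set i1 Uh. \<forall>w. w extreme_point_of dual_set B d \<longrightarrow>
                    norm u ^ 2 + norm w ^ 2 \<le> r"
  shows "rlp_bar_value i1 X c d A B F Uh r = rlp_value X c d A B F (unc_set i1 Uh)"
proof (rule antisym)
  show "rlp_bar_value i1 X c d A B F Uh r \<le> rlp_value X c d A B F (unc_set i1 Uh)"
    using Uh_closed Uh_convex Uh_cone Uh_orthant U_ne U_compact by (rule rlp_bar_value_le_rlp_value)
  show "rlp_value X c d A B F (unc_set i1 Uh) \<le> rlp_bar_value i1 X c d A B F Uh r"
    using A4 r_bound by (rule rlp_value_le_rlp_bar_value)
qed

end
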